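(* Every finite groupoid $\langle A;\cdot\rangle$ with an identity element which is an Abelian algebra is a Hamiltonian algebra.
   Context: A groupoid is an algebra $\langle A;\cdot\rangle$ with one binary operation (its subalgebras are the nonempty subsets closed under $\cdot$); an identity element is $1\in A$ with $1\cdot a=a\cdot 1=a$ for all $a$. A polynomial operation of an algebra is an operation obtained from a term by substituting elements of the algebra for some of its variables. An algebra is called Abelian if for every polynomial operation $t(x,y_1,\ldots,y_n)$ and all elements $u,v,c_1,\ldots,c_n,d_1,\ldots,d_n$ of the algebra, $t(u,c_1,\ldots,c_n)=t(u,d_1,\ldots,d_n)$ implies $t(v,c_1,\ldots,c_n)=t(v,d_1,\ldots,d_n)$. An algebra is called Hamiltonian if the universe of every subalgebra is an equivalence class (block) of some congruence of the algebra. *)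

theory Defs
  imports Main
begin

definition groupoid :: "'a set \<Rightarrow> ('a \<Rightarrow> 'a \<Rightarrow> 'a) \<Rightarrow> bool" where
  "groupoid A m \<longleftrightarrow> A \<noteq> {} \<and> (\<forall>x\<in>A. \<forall>y\<in>A. m x y \<in> A)"

definition is_identity :: "'a set \<Rightarrow> ('a \<Rightarrow> 'a \<Rightarrow> 'a) \<Rightarrow> 'a \<Rightarrow> bool" where
  "is_identity A m e \<longleftrightarrow> e \<in> A \<and> (\<forall>a\<in>A. m e a = a \<and> m a e = a)"

text \<open>Terms in the groupoid signature, with variables indexed by nat and
constants (elements of the algebra) allowed: these describe polynomial operations.\<close>

datatype 'a gterm = Var nat | Const 'a | Mul "'a gterm" "'a gterm"

fun consts_of :: "'a gterm \<Rightarrow> 'a set" where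
  "consts_of (Var i) = {}"
| "consts_of (Const a) = {a}"
| "consts_of (Mul s t) = consts_of s \<union> consts_of t"

fun eval :: "('a \<Rightarrow> 'a \<Rightarrow> 'a) \<Rightarrow> (nat \<Rightarrow> 'a) \<Rightarrow> 'a gterm \<Rightarrow> 'a" where
  "eval m \<rho> (Var i) = \<rho> i"
| "eval m \<rho> (Const a) = a"
| "eval m \<rho> (Mul s t) = m (eval m \<rho> s) (eval m \<rho> t)"

text \<open>Polynomial operations: terms whose constants lie in A. Variable 0 plays
the role of x, the remaining variables the role of y_1, ..., y_n.\<close>

definition abelian :: "'a set \<Rightarrow> ('a \<Rightarrow> 'a \<Rightarrow> 'a) \<Rightarrow> bool" where
  "abelian A m \<longleftrightarrow>
    (\<forall>t u v c d. consts_of t \<subseteq> A \<longrightarrow> u \<in> A \<longrightarrow> v \<in> A \<longrightarrow>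
        range c \<subseteq> A \<longrightarrow> range d \<subseteq> A \<longrightarrow>
        eval m (c(0 := u)) t = eval m (d(0 := u)) t \<longrightarrow>
        eval m (c(0 := v)) t = eval m (d(0 := v)) t)"

definition subalgebra :: "'a set \<Rightarrow> ('a \<Rightarrow> 'a \<Rightarrow> 'a) \<Rightarrow> 'a set \<Rightarrow> bool" where
  "subalgebra A m B \<longleftrightarrow> B \<noteq> {} \<and> B \<subseteq> A \<and> (\<forall>x\<in>B. \<forall>y\<in>B. m x y \<in> B)"

definition congruence :: "'a set \<Rightarrow> ('a \<Rightarrow> 'a \<Rightarrow> 'a) \<Rightarrow> 'a rel \<Rightarrow> bool" where
  "congruence A m \<theta> \<longleftrightarrow> equiv A \<theta> \<and>
     (\<forall>a b c d. (a, b) \<in> \<theta> \<longrightarrow> (c, d) \<in> \<theta> \<longrightarrow> (m a c, m b d) \<in> \<theta>)"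

definition hamiltonian :: "'a set \<Rightarrow> ('a \<Rightarrow> 'a \<Rightarrow> 'a) \<Rightarrow> bool" where
  "hamiltonian A m \<longleftrightarrow>
    (\<forall>B. subalgebra A m B \<longrightarrow> (\<exists>\<theta>. congruence A m \<theta> \<and> B \<in> A // \<theta>))"

end

theory Submission
  imports Defs
begin

text \<open>Substituting the identity into suitable polynomial operations shows that an Abelian
groupoid with identity is a cancellative commutative monoid. If it is finite, cancellation
makes it an Abelian group, so every subalgebra is a subgroup, and a subgroup is a block of the
congruence whose classes are its cosets.\<close>

lemma abelianD:
  assumes "abelian A m" "consts_of t \<subseteq> A" "u \<in> A" "v \<in> A" "range c \<subseteq> A" "range d \<subseteq> A"
    and "eval m (c(0 := u)) t = eval m (d(0 := u)) t"
  shows "eval m (c(0 := v)) t = eval m (d(0 := v)) t"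
  using assms unfolding abelian_def by blast

lemma range_two_updates_subset:
  "e \<in> A \<Longrightarrow> x \<in> A \<Longrightarrow> y \<in> A \<Longrightarrow> range ((\<lambda>_. e)(1 := x, 2 := y)) \<subseteq> A"
  by auto

text \<open>Each law below comes from a polynomial \<open>t(x, y\<^sub>1, y\<^sub>2)\<close> and two choices of
\<open>(y\<^sub>1, y\<^sub>2)\<close> whose values agree for one value of \<open>x\<close> (made obvious by the identity); the
Abelian property transfers this equality to every \<open>x\<close>.\<close>

context
  fixes A :: "'a set" and m :: "'a \<Rightarrow> 'a \<Rightarrow> 'a" and e :: 'a
  assumes abelian: "abelian A m" and identity: "is_identity A m e"
begin

private lemma identity_in: "e \<in> A" and left_unit: "x \<in> A \<Longrightarrow> m e x = x"
  and right_unit: "x \<in> A \<Longrightarrow> m x e = x"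
  using identity unfolding is_identity_def by auto

lemma abelian_left_cancel:
  assumes "a \<in> A" "x \<in> A" "y \<in> A" "m a x = m a y"
  shows "x = y"
proof -
  let ?t = "Mul (Var 0) (Var 1)"
  have "eval m (((\<lambda>_. e)(1 := x, 2 := e))(0 := e)) ?t
      = eval m (((\<lambda>_. e)(1 := y, 2 := e))(0 := e)) ?t"
    by (rule abelianD[OF abelian _ \<open>a \<in> A\<close> identity_in range_two_updates_subset
          range_two_updates_subset]) (use assms identity_in in auto)
  then show ?thesis using assms left_unit by simp
qed

lemma abelian_commute:
  assumes closed: "groupoid A m" and "a \<in> A" "b \<in> A"
  shows "m a b = m b a"
proof -
  let ?t = "Mul (Mul (Var 1) (Var 0)) (Var 2)"
  have "eval m (((\<lambda>_. e)(1 := e, 2 := a))(0 := b)) ?t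
      = eval m (((\<lambda>_. e)(1 := a, 2 := e))(0 := b)) ?t"
    by (rule abelianD[OF abelian _ identity_in \<open>b \<in> A\<close> range_two_updates_subset
          range_two_updates_subset]) (use assms identity_in left_unit right_unit in auto)
  then show ?thesis
    using assms left_unit right_unit closed unfolding groupoid_def by simp
qed

lemma abelian_assoc:
  assumes closed: "groupoid A m" and "a \<in> A" "b \<in> A" "c \<in> A"
  shows "m (m a b) c = m a (m b c)"
proof -
  let ?t = "Mul (Var 1) (Mul (Var 0) (Var 2))"
  have "eval m (((\<lambda>_. e)(1 := a, 2 := c))(0 := b)) ?t
      = eval m (((\<lambda>_. e)(1 := c, 2 := a))(0 := b)) ?t"
    by (rule abelianD[OF abelian _ identity_in \<open>b \<in> A\<close> range_two_updates_subset
          range_two_updates_subset])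
      (use assms identity_in left_unit abelian_commute in auto)
  then have "m a (m b c) = m c (m b a)" by simp
  moreover have "m (m a b) c = m c (m b a)"
    using assms abelian_commute[OF closed] closed unfolding groupoid_def by simp
  ultimately show ?thesis by simp
qed

end

locale comm_monoid_on =
  fixes A :: "'a set" and m :: "'a \<Rightarrow> 'a \<Rightarrow> 'a" and e :: 'a
  assumes closed: "x \<in> A \<Longrightarrow> y \<in> A \<Longrightarrow> m x y \<in> A"
    and commute: "x \<in> A \<Longrightarrow> y \<in> A \<Longrightarrow> m x y = m y x"
    and assoc: "x \<in> A \<Longrightarrow> y \<in> A \<Longrightarrow> z \<in> A \<Longrightarrow> m (m x y) z = m x (m y z)"
    and identity: "is_identity A m e"
begin

lemma swap_middle:
  assumes "x \<in> A" "y \<in> A" "z \<in> A" "w \<in> A"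
  shows "m (m x y) (m z w) = m (m x z) (m y w)"
proof -
  have "m (m x y) (m z w) = m x (m (m y z) w)" using assms assoc closed by simp
  also have "\<dots> = m x (m (m z y) w)" using assms commute by simp
  also have "\<dots> = m (m x z) (m y w)" using assms assoc closed by simp
  finally show ?thesis .
qed

definition coset_rel :: "'a set \<Rightarrow> 'a rel" where
  "coset_rel B = {(a, b). a \<in> A \<and> b \<in> A \<and> (\<exists>\<beta>\<in>B. \<exists>\<gamma>\<in>B. m a \<beta> = m b \<gamma>)}"

lemma coset_rel_trans:
  assumes "subalgebra A m B"
  shows "trans (coset_rel B)"
  unfolding trans_def coset_rel_def
proof clarsimp
  fix a b c \<beta> \<gamma> \<delta> \<epsilon>
  assume h: "a \<in> A" "b \<in> A" "c \<in> A" "\<beta> \<in> B" "\<gamma> \<in> B" "m a \<beta> = m b \<gamma>"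
    "\<delta> \<in> B" "\<epsilon> \<in> B" "m b \<delta> = m c \<epsilon>"
  have inA: "\<beta> \<in> A" "\<gamma> \<in> A" "\<delta> \<in> A" "\<epsilon> \<in> A"
    using h assms unfolding subalgebra_def by auto
  have "m a (m \<beta> \<delta>) = m (m a \<beta>) \<delta>" using assoc[of a \<beta> \<delta>] h(1) inA by simp
  also have "\<dots> = m (m b \<gamma>) \<delta>" using h(6) by simp
  also have "\<dots> = m b (m \<delta> \<gamma>)"
    using assoc[of b \<gamma> \<delta>] commute[of \<gamma> \<delta>] h(2) inA by simp
  also have "\<dots> = m (m b \<delta>) \<gamma>" using assoc[of b \<delta> \<gamma>] h(2) inA by simp
  also have "\<dots> = m (m c \<epsilon>) \<gamma>" using h(9) by simp
  also have "\<dots> = m c (m \<epsilon> \<gamma>)" using assoc[of c \<epsilon> \<gamma>] h(3) inA by simp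
  finally show "\<exists>\<beta>\<in>B. \<exists>\<gamma>\<in>B. m a \<beta> = m c \<gamma>"
    using assms h unfolding subalgebra_def by blast
qed

lemma congruence_coset_rel:
  assumes B: "subalgebra A m B"
  shows "congruence A m (coset_rel B)"
  unfolding congruence_def equiv_def
proof (intro conjI allI impI)
  show "refl_on A (coset_rel B)"
    using B unfolding refl_on_def coset_rel_def subalgebra_def by auto
  show "coset_rel B \<subseteq> A \<times> A" unfolding coset_rel_def by auto
  show "sym (coset_rel B)" unfolding sym_def coset_rel_def by (auto, metis)
  show "trans (coset_rel B)" using coset_rel_trans[OF B] .
  fix a b c d assume "(a, b) \<in> coset_rel B" "(c, d) \<in> coset_rel B"
  then obtain \<beta> \<gamma> \<delta> \<epsilon> where h: "a \<in> A" "b \<in> A" "c \<in> A" "d \<in> A"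
    "\<beta> \<in> B" "\<gamma> \<in> B" "m a \<beta> = m b \<gamma>" "\<delta> \<in> B" "\<epsilon> \<in> B" "m c \<delta> = m d \<epsilon>"
    unfolding coset_rel_def by auto
  have inA: "\<beta> \<in> A" "\<gamma> \<in> A" "\<delta> \<in> A" "\<epsilon> \<in> A"
    using h B unfolding subalgebra_def by auto
  have "m (m a c) (m \<beta> \<delta>) = m (m b d) (m \<gamma> \<epsilon>)"
    using swap_middle h inA by metis
  then show "(m a c, m b d) \<in> coset_rel B"
    using h B closed unfolding coset_rel_def subalgebra_def by blast
qed

lemma subgroup_in_quotient_coset_rel:
  assumes B: "subalgebra A m B"
    and inverses: "\<And>g. g \<in> B \<Longrightarrow> \<exists>\<delta>\<in>B. m g \<delta> = e"
  shows "B \<in> A // coset_rel B"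
proof -
  have BA: "B \<subseteq> A" and Bcl: "\<And>x y. x \<in> B \<Longrightarrow> y \<in> B \<Longrightarrow> m x y \<in> B"
    using B unfolding subalgebra_def by auto
  obtain b0 where b0: "b0 \<in> B" using B unfolding subalgebra_def by blast
  have "coset_rel B `` {b0} = B"
  proof
    show "B \<subseteq> coset_rel B `` {b0}"
      unfolding coset_rel_def using b0 BA commute by blast
    show "coset_rel B `` {b0} \<subseteq> B"
    proof
      fix a assume "a \<in> coset_rel B `` {b0}"
      then obtain \<beta> \<gamma> where h: "a \<in> A" "\<beta> \<in> B" "\<gamma> \<in> B" "m b0 \<beta> = m a \<gamma>"
        unfolding coset_rel_def by auto
      obtain \<delta> where \<delta>: "\<delta> \<in> B" "m \<gamma> \<delta> = e" using inverses h by blast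
      have "a = m (m a \<gamma>) \<delta>"
        using assoc h \<delta> BA identity unfolding is_identity_def by (metis subsetD)
      also have "\<dots> \<in> B" using h \<delta> b0 Bcl by metis
      finally show "a \<in> B" .
    qed
  qed
  then show ?thesis using b0 BA unfolding quotient_def by blast
qed

text \<open>A subalgebra of a finite cancellative monoid is a subgroup: left multiplication by
\<open>g\<close> permutes it, so some element is mapped to \<open>g\<close>, which by cancellation is \<open>e\<close>, and
then some element is mapped to \<open>e\<close>.\<close>

lemma finite_subalgebra_inverses:
  assumes "finite A" and cancel: "\<And>a x y. a \<in> A \<Longrightarrow> x \<in> A \<Longrightarrow> y \<in> A \<Longrightarrow> m a x = m a y \<Longrightarrow> x = y"
    and B: "subalgebra A m B" and "g \<in> B"
  shows "\<exists>\<delta>\<in>B. m g \<delta> = e"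
proof -
  have BA: "B \<subseteq> A" and Bcl: "\<And>x y. x \<in> B \<Longrightarrow> y \<in> B \<Longrightarrow> m x y \<in> B"
    using B unfolding subalgebra_def by auto
  have eA: "e \<in> A" and right_unit: "\<And>x. x \<in> A \<Longrightarrow> m x e = x"
    using identity unfolding is_identity_def by auto
  have "inj_on (m g) B" using cancel \<open>g \<in> B\<close> BA by (auto simp: inj_on_def)
  moreover have "m g ` B \<subseteq> B" using Bcl \<open>g \<in> B\<close> by auto
  ultimately have onto: "m g ` B = B"
    using \<open>finite A\<close> BA by (simp add: endo_inj_surj finite_subset)
  then obtain x where x: "x \<in> B" "m g x = g" using \<open>g \<in> B\<close> by (metis imageE)
  have "x = e" using cancel[of g x e] x \<open>g \<in> B\<close> BA right_unit eA by auto
  then show ?thesis using x onto by (metis imageE)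
qed

lemma finite_cancellative_hamiltonian:
  assumes "finite A"
    and "\<And>a x y. a \<in> A \<Longrightarrow> x \<in> A \<Longrightarrow> y \<in> A \<Longrightarrow> m a x = m a y \<Longrightarrow> x = y"
  shows "hamiltonian A m"
  unfolding hamiltonian_def
proof (intro allI impI)
  fix B assume B: "subalgebra A m B"
  have "B \<in> A // coset_rel B"
    using subgroup_in_quotient_coset_rel[OF B] finite_subalgebra_inverses[OF assms B] .
  with congruence_coset_rel[OF B] show "\<exists>\<theta>. congruence A m \<theta> \<and> B \<in> A // \<theta>" by blast
qed

end

theorem mainTheorem3:
  fixes A :: "'a set" and m :: "'a \<Rightarrow> 'a \<Rightarrow> 'a" and e :: 'a
  assumes "groupoid A m"
    and "finite A"
    and "is_identity A m e"
    and "abelian A m"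
  shows "hamiltonian A m"
proof -
  interpret comm_monoid_on A m e
  proof
    show "\<And>x y. x \<in> A \<Longrightarrow> y \<in> A \<Longrightarrow> m x y \<in> A"
      using assms(1) unfolding groupoid_def by blast
  qed (use abelian_commute abelian_assoc assms in auto)
  show ?thesis
    using finite_cancellative_hamiltonian[OF assms(2)] abelian_left_cancel[OF assms(4,3)]
    by blast
qed

end
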